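(* For every $\varepsilon>0$ there exists $d_0$ such that for every integer $d\ge d_0$ and every triangle-free graph $G$ on $n$ vertices with maximum degree $d$, \[ \frac{1}{|\mathcal I(G)|}\sum_{I\in\mathcal I(G)}|I| \;\ge\; (1-\varepsilon)\,\frac{\log d}{d}\,n. \] (Equivalently, the average size of an independent set of $G$ is at least $(1+o_d(1))\frac{\log d}{d}n$.)
   Context: $\mathcal I(G)$ denotes the set of all independent sets of $G$ (including the empty set). Logarithms are natural. $o_d(1)$ denotes a quantity tending to $0$ as $d\to\infty$, uniformly over all graphs in question. *)

theory Defs
  imports "HOL-Analysis.Analysis"
begin

definition simple_graph :: "'a set \<Rightarrow> ('a \<Rightarrow> 'a \<Rightarrow> bool) \<Rightarrow> bool" where
  "simple_graph V E \<longleftrightarrow> finite V \<and> (\<forall>x y. E x y \<longrightarrow> x \<in> V \<and> y \<in> V) \<and>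
     (\<forall>x y. E x y \<longrightarrow> E y x) \<and> (\<forall>x. \<not> E x x)"

definition degree :: "'a set \<Rightarrow> ('a \<Rightarrow> 'a \<Rightarrow> bool) \<Rightarrow> 'a \<Rightarrow> nat" where
  "degree V E v = card {u \<in> V. E v u}"

definition max_degree :: "'a set \<Rightarrow> ('a \<Rightarrow> 'a \<Rightarrow> bool) \<Rightarrow> nat" where
  "max_degree V E = Max (insert 0 (degree V E ` V))"

definition triangle_free :: "'a set \<Rightarrow> ('a \<Rightarrow> 'a \<Rightarrow> bool) \<Rightarrow> bool" where
  "triangle_free V E \<longleftrightarrow> \<not> (\<exists>x\<in>V. \<exists>y\<in>V. \<exists>z\<in>V. E x y \<and> E y z \<and> E x z)"

definition independent_sets :: "'a set \<Rightarrow> ('a \<Rightarrow> 'a \<Rightarrow> bool) \<Rightarrow> 'a set set" where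
  "independent_sets V E = {I. I \<subseteq> V \<and> (\<forall>x\<in>I. \<forall>y\<in>I. \<not> E x y)}"

end

theory Submission
  imports Defs "HOL-Real_Asymp.Real_Asymp"
begin

text \<open>Weight each independent set \<open>I\<close> by \<open>l ^ card I\<close> with fugacity \<open>l = 1 / ln d\<close>
  (the hard-core model). As \<open>l \<le> 1\<close> these weights favour small sets, so by Chebyshev's sum
  inequality the uniform average size dominates the weighted one. For the weighted average fix a
  vertex \<open>v\<close> and condition on the part \<open>J\<close> of \<open>I\<close> outside the closed neighbourhood of
  \<open>v\<close>: then \<open>I = insert v J\<close> or \<open>I = J \<union> S\<close> for an arbitrary subset \<open>S\<close> of the \<open>y\<close>
  neighbours of \<open>v\<close> having no neighbour in \<open>J\<close> (arbitrary because the graph is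
  triangle-free). Whether \<open>v \<in> I\<close> and how many neighbours of \<open>v\<close> lie in \<open>I\<close> then have
  explicit conditional expectations in terms of \<open>y\<close>, and the combination
  \<open>local_occupancy \<theta> d v I\<close> of the two has expectation at least \<open>(1 - \<epsilon>) ln d / d\<close>
  whatever \<open>y\<close> is. Summed over all \<open>v\<close> this combination is at most \<open>card I\<close>, since every vertex has at most \<open>d\<close> neighbours.\<close>

definition neighbours :: "'a set \<Rightarrow> ('a \<Rightarrow> 'a \<Rightarrow> bool) \<Rightarrow> 'a \<Rightarrow> 'a set" where
  "neighbours V E v = {u \<in> V. E v u}"

definition free_neighbours :: "'a set \<Rightarrow> ('a \<Rightarrow> 'a \<Rightarrow> bool) \<Rightarrow> 'a \<Rightarrow> 'a set \<Rightarrow> 'a set" where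
  "free_neighbours V E v J = {u \<in> neighbours V E v. \<forall>j\<in>J. \<not> E u j}"

definition average_independent_set_size :: "'a set \<Rightarrow> ('a \<Rightarrow> 'a \<Rightarrow> bool) \<Rightarrow> real" where
  "average_independent_set_size V E =
     (\<Sum>I\<in>independent_sets V E. real (card I)) / real (card (independent_sets V E))"

lemma sum_Pow_power_card:
  fixes l :: "'b::comm_semiring_1"
  assumes "finite U"
  shows "(\<Sum>S\<in>Pow U. l ^ card S) = (1 + l) ^ card U"
  using prod_add[OF assms, of "\<lambda>_. l" "\<lambda>_. 1"] by (simp add: add.commute)

lemma sum_Pow_insert:
  assumes "finite A" "x \<notin> A"
  shows "(\<Sum>S\<in>Pow (insert x A). f S) = (\<Sum>S\<in>Pow A. f S) + (\<Sum>S\<in>Pow A. f (insert x S))"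
proof -
  have "inj_on (insert x) (Pow A)"
    using assms(2) unfolding inj_on_def by (metis PowD in_mono insert_ident)
  moreover have "Pow A \<inter> insert x ` Pow A = {}" using assms(2) by auto
  ultimately show ?thesis
    using assms(1) by (simp add: Pow_insert sum.union_disjoint sum.reindex)
qed

lemma sum_Pow_card_power_card:
  fixes l :: "'b::comm_semiring_1"
  assumes "finite U"
  shows "(1 + l) * (\<Sum>S\<in>Pow U. of_nat (card S) * l ^ card S) = of_nat (card U) * l * (1 + l) ^ card U"
  using assms
proof (induction U rule: finite_induct)
  case empty
  then show ?case by simp
next
  case (insert x A)
  define G where "G = (\<Sum>S\<in>Pow A. of_nat (card S) * l ^ card S)"
  have card_insert: "card (insert x S) = Suc (card S)" if "S \<in> Pow A" for S
    using that insert.hyps by (meson PowD card_insert_disjoint finite_subset in_mono)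
  have "(\<Sum>S\<in>Pow (insert x A). of_nat (card S) * l ^ card S)
      = G + (\<Sum>S\<in>Pow A. l * (of_nat (card S) * l ^ card S) + l * l ^ card S)"
    unfolding sum_Pow_insert[OF insert.hyps] G_def
    by (intro arg_cong2[where f = "(+)"] refl sum.cong) (auto simp: card_insert algebra_simps)
  also have "\<dots> = G + l * G + l * (\<Sum>S\<in>Pow A. l ^ card S)"
    by (simp add: G_def sum.distrib sum_distrib_left add.assoc)
  finally show ?case
    using insert by (simp add: G_def sum_Pow_power_card algebra_simps)
qed

lemma Chebyshev_sum_upper_set:
  fixes a b :: "'i \<Rightarrow> 'b::linordered_idom"
  assumes "\<And>i j. i \<in> A \<Longrightarrow> j \<in> A \<Longrightarrow> (a i - a j) * (b i - b j) \<le> 0"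
  shows "of_nat (card A) * (\<Sum>i\<in>A. a i * b i) \<le> sum a A * sum b A"
proof -
  have "2 * (of_nat (card A) * (\<Sum>i\<in>A. a i * b i) - sum a A * sum b A)
      = (\<Sum>i\<in>A. \<Sum>j\<in>A. (a i - a j) * (b i - b j))"
    by (simp only: one_add_one[symmetric] algebra_simps)
      (simp add: algebra_simps sum_subtractf sum.distrib sum.swap[of "\<lambda>i j. a j * b i"]
        sum_distrib_left sum_distrib_right)
  also have "\<dots> \<le> 0"
    using assms by (intro sum_nonpos) auto
  finally show ?thesis by simp
qed

lemma weighted_average_card_le_average:
  fixes l :: real and A :: "'a set set"
  assumes A: "finite A" "A \<noteq> {}" and l: "0 < l" "l \<le> 1"
  shows "(\<Sum>I\<in>A. real (card I) * l ^ card I) / (\<Sum>I\<in>A. l ^ card I)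
    \<le> (\<Sum>I\<in>A. real (card I)) / real (card A)"
proof -
  have "(real (card I) - real (card J)) * (l ^ card I - l ^ card J) \<le> 0" for I J
    using l power_decreasing[of "card I" "card J" l] power_decreasing[of "card J" "card I" l]
    by (cases "card I \<le> card J") (auto simp: mult_le_0_iff)
  then have "real (card A) * (\<Sum>I\<in>A. real (card I) * l ^ card I)
      \<le> (\<Sum>I\<in>A. real (card I)) * (\<Sum>I\<in>A. l ^ card I)"
    by (intro Chebyshev_sum_upper_set)
  moreover have "0 < (\<Sum>I\<in>A. l ^ card I)" "0 < real (card A)"
    using A l by (auto intro: sum_pos simp: card_gt_0_iff)
  ultimately show ?thesis
    by (simp add: divide_simps mult.commute)
qed

text \<open>Here \<open>y\<close> is the number of free neighbours of \<open>v\<close> and \<open>(1 + l) ^ y\<close> the weight of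
  the fiber; if it is at most \<open>Q\<close> then \<open>v\<close> itself is occupied often enough, otherwise its
  neighbourhood is.\<close>
lemma local_occupancy_inequality:
  fixes l \<theta> d c Q :: real and y :: nat
  assumes l: "0 < l" and \<theta>: "0 \<le> \<theta>" "\<theta> \<le> 1" and d: "0 < d" and c: "0 \<le> c" and Q: "0 < Q"
    and small: "c * (l + Q) \<le> \<theta> * l"
    and large: "c * d * (1 + l) * (1 + l / Q) \<le> (1 - \<theta>) * ln Q"
  shows "c * (l + (1 + l) ^ y) \<le> \<theta> * l + (1 - \<theta>) / d * (real y * l * (1 + l) ^ y / (1 + l))"
proof -
  define q where "q = (1 + l) ^ y"
  have q: "0 < q" unfolding q_def using l by simp
  have "0 \<le> \<theta> * l" "0 \<le> (1 - \<theta>) / d * (real y * l * q / (1 + l))"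
    using \<theta> d l q by auto
  show ?thesis
  proof (cases "q \<le> Q")
    case True
    then have "c * (l + q) \<le> c * (l + Q)" using c by (intro mult_left_mono) auto
    then show ?thesis using small \<open>0 \<le> (1 - \<theta>) / d * _\<close> unfolding q_def by linarith
  next
    case False
    have "ln Q \<le> real y * l"
    proof -
      have "ln Q < ln q" using False Q by simp
      also have "ln q = real y * ln (1 + l)" using l by (simp add: q_def ln_realpow)
      also have "\<dots> \<le> real y * l" using l by (intro mult_left_mono ln_add_one_self_le_self) auto
      finally show ?thesis by simp
    qed
    have "c * (1 + l / Q) \<le> (1 - \<theta>) * (real y * l) / (d * (1 + l))"
    proof -
      have "c * (1 + l / Q) * (d * (1 + l)) \<le> (1 - \<theta>) * ln Q"
        using large by (simp add: ac_simps)
      also have "\<dots> \<le> (1 - \<theta>) * (real y * l)"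
        using \<open>ln Q \<le> _\<close> \<theta> by (intro mult_left_mono) auto
      finally show ?thesis using d l by (simp add: pos_le_divide_eq)
    qed
    have "l \<le> q * l / Q" using False l Q by (simp add: field_simps)
    from mult_left_mono[OF this c] have "c * (l + q) \<le> q * (c * (1 + l / Q))"
      by (simp add: algebra_simps)
    also have "\<dots> \<le> q * ((1 - \<theta>) * (real y * l) / (d * (1 + l)))"
      using \<open>c * (1 + l / Q) \<le> _\<close> q by (intro mult_left_mono) auto
    also have "\<dots> = (1 - \<theta>) / d * (real y * l * q / (1 + l))"
      by simp
    finally show ?thesis using \<open>0 \<le> \<theta> * l\<close> unfolding q_def by linarith
  qed
qed

lemma empty_in_independent_sets: "{} \<in> independent_sets V E"
  by (simp add: independent_sets_def)

locale finite_graph =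
  fixes V :: "'a set" and E :: "'a \<Rightarrow> 'a \<Rightarrow> bool"
  assumes graph: "simple_graph V E"
begin

lemma finite_vertices: "finite V"
  using graph by (simp add: simple_graph_def)

lemma edge_sym: "E x y \<Longrightarrow> E y x"
  using graph by (simp add: simple_graph_def)

lemma edge_irrefl: "\<not> E x x"
  using graph by (simp add: simple_graph_def)

lemma edge_vertices: "E x y \<Longrightarrow> x \<in> V \<and> y \<in> V"
  using graph by (simp add: simple_graph_def)

lemma finite_independent_sets: "finite (independent_sets V E)"
  by (rule finite_subset[of _ "Pow V"]) (auto simp: independent_sets_def finite_vertices)

lemma degree_le_max_degree: "v \<in> V \<Longrightarrow> degree V E v \<le> max_degree V E"
  unfolding max_degree_def using finite_vertices by (intro Max_ge) auto

lemma sum_card_Int_neighbours_le: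
  assumes "I \<subseteq> V"
  shows "(\<Sum>v\<in>V. card (I \<inter> neighbours V E v)) \<le> max_degree V E * card I"
proof -
  have fin: "finite I" using assms finite_vertices finite_subset by blast
  have "I \<inter> neighbours V E v = {u \<in> I. E v u}" for v
    using assms by (auto simp: neighbours_def)
  then have "(\<Sum>v\<in>V. card (I \<inter> neighbours V E v)) = (\<Sum>v\<in>V. \<Sum>u\<in>I. of_bool (E v u))"
    using fin by (simp add: Int_def flip: sum.inter_filter)
  also have "\<dots> = (\<Sum>u\<in>I. \<Sum>v\<in>V. of_bool (E v u))"
    by (rule sum.swap)
  also have "\<dots> = (\<Sum>u\<in>I. degree V E u)"
  proof (intro sum.cong refl)
    fix u
    have "{v \<in> V. E v u} = {v \<in> V. E u v}" using edge_sym by blast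
    then show "(\<Sum>v\<in>V. of_bool (E v u)) = degree V E u"
      using finite_vertices by (simp add: degree_def Int_def flip: sum.inter_filter)
  qed
  also have "\<dots> \<le> (\<Sum>u\<in>I. max_degree V E)"
    using assms degree_le_max_degree by (intro sum_mono) auto
  finally show ?thesis by (simp add: mult.commute)
qed

definition local_occupancy :: "real \<Rightarrow> real \<Rightarrow> 'a \<Rightarrow> 'a set \<Rightarrow> real" where
  "local_occupancy \<theta> d v I = \<theta> * of_bool (v \<in> I) + (1 - \<theta>) / d * real (card (I \<inter> neighbours V E v))"

lemma sum_local_occupancy_le:
  assumes I: "I \<subseteq> V" and \<theta>: "0 \<le> \<theta>" "\<theta> \<le> 1" and d: "real (max_degree V E) \<le> d" "0 < d"
  shows "(\<Sum>v\<in>V. local_occupancy \<theta> d v I) \<le> real (card I)"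
proof -
  have "(\<Sum>v\<in>V. of_bool (v \<in> I)) = real (card I)"
    using I finite_vertices by (simp add: Int_absorb1 flip: sum.inter_filter)
  moreover have "(\<Sum>v\<in>V. real (card (I \<inter> neighbours V E v))) \<le> d * real (card I)"
  proof -
    have "(\<Sum>v\<in>V. real (card (I \<inter> neighbours V E v))) \<le> real (max_degree V E) * real (card I)"
      using sum_card_Int_neighbours_le[OF I] by (simp flip: of_nat_sum of_nat_mult)
    also have "\<dots> \<le> d * real (card I)" using d by (intro mult_right_mono) auto
    finally show ?thesis .
  qed
  ultimately have "(\<Sum>v\<in>V. local_occupancy \<theta> d v I)
      \<le> \<theta> * real (card I) + (1 - \<theta>) / d * (d * real (card I))"
    using \<theta> d unfolding local_occupancy_def sum.distrib sum_distrib_left[symmetric]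
    by (intro add_mono mult_left_mono) auto
  also have "\<dots> = real (card I)" using d by (simp add: field_simps)
  finally show ?thesis .
qed

lemma fiber_local_occupancy_sum:
  fixes l \<theta> d c :: real
  assumes v: "v \<in> V" and J: "J \<subseteq> V - insert v (neighbours V E v)" and l: "0 < l"
  defines "U \<equiv> free_neighbours V E v J"
  defines "w \<equiv> \<lambda>I. l ^ card I * (local_occupancy \<theta> d v I - c)"
  shows "w (insert v J) + (\<Sum>S\<in>Pow U. w (J \<union> S))
    = l ^ card J * (\<theta> * l + (1 - \<theta>) / d * (real (card U) * l * (1 + l) ^ card U / (1 + l))
        - c * (l + (1 + l) ^ card U))"
proof -
  have fin: "finite J" "finite U"
    using J finite_vertices finite_subset by (auto simp: U_def free_neighbours_def neighbours_def)
  have U: "U \<subseteq> neighbours V E v" "v \<notin> U"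
    using edge_irrefl by (auto simp: U_def free_neighbours_def neighbours_def)
  have w_insert: "w (insert v J) = l ^ card J * (\<theta> * l - c * l)"
  proof -
    have "v \<notin> J" "insert v J \<inter> neighbours V E v = {}"
      using J edge_irrefl by (auto simp: neighbours_def)
    with fin show ?thesis by (simp add: w_def local_occupancy_def algebra_simps)
  qed
  have w_Un: "w (J \<union> S) = l ^ card J * ((1 - \<theta>) / d * (real (card S) * l ^ card S) - c * l ^ card S)"
    if "S \<subseteq> U" for S
  proof -
    have "finite S" "J \<inter> S = {}" "v \<notin> J \<union> S" "(J \<union> S) \<inter> neighbours V E v = S"
      using that fin U J finite_subset by auto
    then show ?thesis
      using fin by (simp add: w_def local_occupancy_def card_Un_disjoint power_add algebra_simps)
  qed
  have "(\<Sum>S\<in>Pow U. w (J \<union> S))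
    = (\<Sum>S\<in>Pow U. l ^ card J * ((1 - \<theta>) / d * (real (card S) * l ^ card S) - c * l ^ card S))"
    by (rule sum.cong) (simp_all add: w_Un)
  then have "w (insert v J) + (\<Sum>S\<in>Pow U. w (J \<union> S))
    = l ^ card J * (\<theta> * l - c * l + (1 - \<theta>) / d * (\<Sum>S\<in>Pow U. real (card S) * l ^ card S)
        - c * (\<Sum>S\<in>Pow U. l ^ card S))"
    by (simp add: w_insert sum_subtractf sum_distrib_left algebra_simps)
  moreover have "(\<Sum>S\<in>Pow U. real (card S) * l ^ card S) = real (card U) * l * (1 + l) ^ card U / (1 + l)"
    using sum_Pow_card_power_card[OF fin(2), of l] l by (simp add: field_simps)
  ultimately show ?thesis
    using fin by (simp add: sum_Pow_power_card algebra_simps)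
qed

end

locale triangle_free_graph = finite_graph +
  assumes no_triangle: "triangle_free V E"
begin

lemma neighbours_not_adjacent: "E v x \<Longrightarrow> E v y \<Longrightarrow> \<not> E x y"
  using no_triangle edge_vertices unfolding triangle_free_def by blast

lemma independent_sets_fiber:
  assumes v: "v \<in> V" and J: "J \<in> independent_sets (V - insert v (neighbours V E v)) E"
  shows "{I \<in> independent_sets V E. I - insert v (neighbours V E v) = J}
    = insert (insert v J) ((\<union>) J ` Pow (free_neighbours V E v J))"
proof (intro equalityI subsetI)
  fix I assume "I \<in> {I \<in> independent_sets V E. I - insert v (neighbours V E v) = J}"
  then have I: "I \<in> independent_sets V E" and IJ: "I - insert v (neighbours V E v) = J" by auto
  show "I \<in> insert (insert v J) ((\<union>) J ` Pow (free_neighbours V E v J))"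
  proof (cases "v \<in> I")
    case True
    then have "I \<inter> neighbours V E v = {}" using I by (auto simp: independent_sets_def neighbours_def)
    then show ?thesis using True IJ by blast
  next
    case False
    then have "I = J \<union> (I \<inter> neighbours V E v)" using IJ by blast
    moreover have "I \<inter> neighbours V E v \<subseteq> free_neighbours V E v J"
      using I IJ by (auto simp: independent_sets_def free_neighbours_def)
    ultimately show ?thesis by blast
  qed
next
  have J_sub: "J \<subseteq> V" "J \<inter> insert v (neighbours V E v) = {}"
    and J_ind: "\<And>x y. x \<in> J \<Longrightarrow> y \<in> J \<Longrightarrow> \<not> E x y"
    using J by (auto simp: independent_sets_def)
  fix I assume "I \<in> insert (insert v J) ((\<union>) J ` Pow (free_neighbours V E v J))"
  then consider "I = insert v J" | S where "S \<subseteq> free_neighbours V E v J" "I = J \<union> S" by auto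
  then show "I \<in> {I \<in> independent_sets V E. I - insert v (neighbours V E v) = J}"
  proof cases
    case 1
    have "\<not> E v x \<and> \<not> E x v" if "x \<in> J" for x
      using that J_sub edge_sym by (auto simp: neighbours_def)
    then have "insert v J \<in> independent_sets V E"
      using v J_sub(1) J_ind edge_irrefl unfolding independent_sets_def by blast
    moreover have "insert v J - insert v (neighbours V E v) = J" using J_sub(2) by blast
    ultimately show ?thesis using 1 by simp
  next
    case 2
    have S_N: "S \<subseteq> neighbours V E v" using 2(1) by (auto simp: free_neighbours_def)
    have S_J: "\<not> E u j \<and> \<not> E j u" if "u \<in> S" "j \<in> J" for u j
      using 2(1) that edge_sym unfolding free_neighbours_def by blast
    have S_ind: "\<not> E x y" if "x \<in> S" "y \<in> S" for x y
      using S_N that neighbours_not_adjacent unfolding neighbours_def by blast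
    have "J \<union> S \<subseteq> V" using J_sub(1) S_N by (auto simp: neighbours_def)
    moreover have "\<not> E x y" if "x \<in> J \<union> S" "y \<in> J \<union> S" for x y
      using that J_ind S_J S_ind by blast
    ultimately have "J \<union> S \<in> independent_sets V E" unfolding independent_sets_def by blast
    moreover have "J \<union> S - insert v (neighbours V E v) = J" using J_sub(2) S_N by blast
    ultimately show ?thesis using 2 by simp
  qed
qed

lemma sum_independent_sets_split:
  assumes v: "v \<in> V"
  shows "(\<Sum>I\<in>independent_sets V E. f I)
    = (\<Sum>J\<in>independent_sets (V - insert v (neighbours V E v)) E.
        f (insert v J) + (\<Sum>S\<in>Pow (free_neighbours V E v J). f (J \<union> S)))"
proof -
  let ?N = "insert v (neighbours V E v)"
  let ?J = "independent_sets (V - ?N) E"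
  have "?J \<subseteq> independent_sets V E" by (auto simp: independent_sets_def)
  then have fin: "finite ?J" using finite_independent_sets finite_subset by blast
  have img: "(\<lambda>I. I - ?N) ` independent_sets V E \<subseteq> ?J" by (auto simp: independent_sets_def)
  have "(\<Sum>I\<in>independent_sets V E. f I) = (\<Sum>J\<in>?J. \<Sum>I\<in>{I \<in> independent_sets V E. I - ?N = J}. f I)"
    using sum.group[OF finite_independent_sets fin img, of f] by simp
  also have "\<dots> = (\<Sum>J\<in>?J. f (insert v J) + (\<Sum>S\<in>Pow (free_neighbours V E v J). f (J \<union> S)))"
  proof (rule sum.cong[OF refl])
    fix J assume J: "J \<in> ?J"
    let ?U = "free_neighbours V E v J"
    have "J \<inter> ?N = {}" "?U \<subseteq> neighbours V E v" "v \<notin> ?U" "finite ?U"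
      using J edge_irrefl finite_vertices
      by (auto simp: independent_sets_def free_neighbours_def neighbours_def)
    then have "insert v J \<notin> (\<union>) J ` Pow ?U" "inj_on ((\<union>) J) (Pow ?U)" "finite (Pow ?U)"
      unfolding inj_on_def by blast+
    then show "(\<Sum>I\<in>{I \<in> independent_sets V E. I - ?N = J}. f I)
        = f (insert v J) + (\<Sum>S\<in>Pow ?U. f (J \<union> S))"
      by (simp add: independent_sets_fiber[OF v J] sum.reindex)
  qed
  finally show ?thesis .
qed

lemma local_occupancy_sum_nonneg:
  assumes v: "v \<in> V" and l: "0 < l" and \<theta>: "0 \<le> \<theta>" "\<theta> \<le> 1" and d: "0 < d"
    and c: "0 \<le> c" and Q: "0 < Q"
    and small: "c * (l + Q) \<le> \<theta> * l"
    and large: "c * d * (1 + l) * (1 + l / Q) \<le> (1 - \<theta>) * ln Q"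
  shows "0 \<le> (\<Sum>I\<in>independent_sets V E. l ^ card I * (local_occupancy \<theta> d v I - c))"
  unfolding sum_independent_sets_split[OF v]
proof (rule sum_nonneg)
  fix J assume "J \<in> independent_sets (V - insert v (neighbours V E v)) E"
  then have J: "J \<subseteq> V - insert v (neighbours V E v)" by (simp add: independent_sets_def)
  show "0 \<le> l ^ card (insert v J) * (local_occupancy \<theta> d v (insert v J) - c)
      + (\<Sum>S\<in>Pow (free_neighbours V E v J). l ^ card (J \<union> S) * (local_occupancy \<theta> d v (J \<union> S) - c))"
    using fiber_local_occupancy_sum[OF v J l, of \<theta> d c]
      local_occupancy_inequality[OF l \<theta> d c Q small large, of "card (free_neighbours V E v J)"] l
    by simp
qed

lemma weighted_occupancy_ge:
  assumes d: "real (max_degree V E) \<le> d" "0 < d" and l: "0 < l" and \<theta>: "0 \<le> \<theta>" "\<theta> \<le> 1"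
    and c: "0 \<le> c" and Q: "0 < Q"
    and small: "c * (l + Q) \<le> \<theta> * l"
    and large: "c * d * (1 + l) * (1 + l / Q) \<le> (1 - \<theta>) * ln Q"
  shows "c * real (card V) * (\<Sum>I\<in>independent_sets V E. l ^ card I)
    \<le> (\<Sum>I\<in>independent_sets V E. real (card I) * l ^ card I)"
proof -
  let ?II = "independent_sets V E"
  have "0 \<le> (\<Sum>v\<in>V. \<Sum>I\<in>?II. l ^ card I * (local_occupancy \<theta> d v I - c))"
    using local_occupancy_sum_nonneg[OF _ l \<theta> d(2) c Q small large] by (rule sum_nonneg) blast
  also have "\<dots> = (\<Sum>I\<in>?II. l ^ card I * ((\<Sum>v\<in>V. local_occupancy \<theta> d v I) - c * real (card V)))"
    by (subst sum.swap, rule sum.cong) (simp_all add: sum_subtractf mult.commute flip: sum_distrib_left)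
  also have "\<dots> \<le> (\<Sum>I\<in>?II. l ^ card I * (real (card I) - c * real (card V)))"
    using sum_local_occupancy_le[OF _ \<theta> d] l
    by (intro sum_mono mult_left_mono) (auto simp: independent_sets_def)
  finally show ?thesis
    by (simp add: sum_subtractf sum_distrib_left sum_distrib_right algebra_simps)
qed

lemma average_independent_set_size_ge:
  assumes d: "real (max_degree V E) \<le> d" "0 < d" and l: "0 < l" "l \<le> 1" and \<theta>: "0 \<le> \<theta>" "\<theta> \<le> 1"
    and c: "0 \<le> c" and Q: "0 < Q"
    and small: "c * (l + Q) \<le> \<theta> * l"
    and large: "c * d * (1 + l) * (1 + l / Q) \<le> (1 - \<theta>) * ln Q"
  shows "c * real (card V) \<le> average_independent_set_size V E"
proof -
  let ?II = "independent_sets V E"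
  have "0 < (\<Sum>I\<in>?II. l ^ card I)"
    using l finite_independent_sets empty_in_independent_sets by (intro sum_pos) auto
  then have "c * real (card V) \<le> (\<Sum>I\<in>?II. real (card I) * l ^ card I) / (\<Sum>I\<in>?II. l ^ card I)"
    using weighted_occupancy_ge[OF d l(1) \<theta> c Q small large] by (simp add: pos_le_divide_eq)
  also have "\<dots> \<le> average_independent_set_size V E"
    unfolding average_independent_set_size_def
    using finite_independent_sets empty_in_independent_sets l
    by (intro weighted_average_card_le_average) auto
  finally show ?thesis .
qed

end

text \<open>The hypotheses of \<open>average_independent_set_size_ge\<close> for \<open>l = 1 / ln d\<close>,
  \<open>\<theta> = e / 2\<close>, \<open>c = (1 - e) ln d / d\<close> and \<open>Q = d / (ln d)\<^sup>3\<close>.\<close>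
lemma eventually_occupancy_parameters:
  fixes e :: real
  assumes "0 < e" "e < 1"
  shows "\<forall>\<^sub>F x in at_top. 1 \<le> ln x \<and> 0 < x / ln x ^ 3 \<and>
    (1 - e) * ln x / x * (1 / ln x + x / ln x ^ 3) \<le> e / 2 * (1 / ln x) \<and>
    (1 - e) * ln x / x * x * (1 + 1 / ln x) * (1 + 1 / ln x / (x / ln x ^ 3))
      \<le> (1 - e / 2) * ln (x / ln x ^ 3)"
  using assms by (intro eventually_conj; real_asymp)

lemma eventually_average_independent_set_size_ge:
  fixes \<epsilon> :: real
  assumes "0 < \<epsilon>"
  shows "\<forall>\<^sub>F d in sequentially. \<forall>(V :: 'a set) E.
    simple_graph V E \<and> triangle_free V E \<and> max_degree V E = d \<longrightarrow>
      (1 - \<epsilon>) * (ln (real d) / real d) * real (card V) \<le> average_independent_set_size V E"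
proof -
  define e where "e = min \<epsilon> (1/2)"
  have e: "0 < e" "e < 1" "e \<le> \<epsilon>" using assms by (auto simp: e_def)
  show ?thesis
    using eventually_compose_filterlim[OF eventually_occupancy_parameters[OF e(1,2)]
        filterlim_real_sequentially]
  proof eventually_elim
    case (elim d)
    have ln_d: "1 \<le> ln (real d)" using elim by blast
    then have d: "0 < real d" by (auto intro: ccontr)
    have l: "0 < 1 / ln (real d)" "1 / ln (real d) \<le> 1" using ln_d by auto
    show ?case
    proof (intro allI impI)
      fix V :: "'a set" and E
      assume G: "simple_graph V E \<and> triangle_free V E \<and> max_degree V E = d"
      then interpret triangle_free_graph V E by unfold_locales auto
      have "(1 - e) * ln (real d) / real d * real (card V) \<le> average_independent_set_size V E"
        using elim by (elim conjE)
          (rule average_independent_set_size_ge[of "real d" "1 / ln (real d)" "e / 2" _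
              "real d / ln (real d) ^ 3"]; (assumption | use d l G e ln_d in auto))
      moreover have "(1 - \<epsilon>) * (ln (real d) / real d) * real (card V)
          \<le> (1 - e) * (ln (real d) / real d) * real (card V)"
        using e d ln_d by (intro mult_right_mono) auto
      ultimately show "(1 - \<epsilon>) * (ln (real d) / real d) * real (card V) \<le> average_independent_set_size V E"
        by simp
    qed
  qed
qed

theorem theorem1p1:
  "\<forall>\<epsilon>::real. \<epsilon> > 0 \<longrightarrow> (\<exists>d0::nat. \<forall>d::nat. d \<ge> d0 \<longrightarrow>
     (\<forall>(V::nat set) E. simple_graph V E \<and> triangle_free V E \<and> max_degree V E = d \<longrightarrow>
        (\<Sum>I\<in>independent_sets V E. real (card I)) / real (card (independent_sets V E))
          \<ge> (1 - \<epsilon>) * (ln (real d) / real d) * real (card V)))"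
  using eventually_average_independent_set_size_ge
  unfolding eventually_sequentially average_independent_set_size_def by blast

end
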